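(* Let $n\ge 3$. For every set $S$ of $n$ red and blue points in the plane in general position containing at least one point of each color, every edge of every minimum bichromatic spanning tree of $S$ crosses at most $n-3$ other edges of that tree. Moreover, this bound is best possible: for every $n\ge 3$ there exists a set of $n$ red and blue points in general position having a minimum bichromatic spanning tree in which some edge crosses exactly $n-3$ other edges.
   Context: A set of points is in general position if no three of them are collinear. A bichromatic spanning tree of a set $S$ of red and blue points is a spanning tree on vertex set $S$, drawn with straight-line segment edges, in which every edge has one red and one blue endpoint. A minimum bichromatic spanning tree (MinBST) is a bichromatic spanning tree of minimum total Euclidean edge length. Two edges (segments) cross if they share a point that is interior to both segments. *)

theory Defs
  imports "HOL-Analysis.Analysis"
begin

type_synonym point = "real^2"

definition general_position :: "point set \<Rightarrow> bool" where
  "general_position S \<longleftrightarrow>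
     (\<forall>a\<in>S. \<forall>b\<in>S. \<forall>c\<in>S. a \<noteq> b \<and> b \<noteq> c \<and> a \<noteq> c \<longrightarrow> \<not> collinear {a, b, c})"

definition is_edge_on :: "point set \<Rightarrow> point set \<Rightarrow> bool" where
  "is_edge_on S e \<longleftrightarrow> (\<exists>a b. a \<in> S \<and> b \<in> S \<and> a \<noteq> b \<and> e = {a, b})"

definition connected_graph :: "point set \<Rightarrow> point set set \<Rightarrow> bool" where
  "connected_graph S T \<longleftrightarrow>
     (\<forall>u\<in>S. \<forall>v\<in>S. (u, v) \<in> {(x, y). {x, y} \<in> T \<and> x \<noteq> y}\<^sup>*)"

definition spanning_tree :: "point set \<Rightarrow> point set set \<Rightarrow> bool" where
  "spanning_tree S T \<longleftrightarrow>
     (\<forall>e\<in>T. is_edge_on S e) \<and> connected_graph S T \<and>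
     (\<forall>e\<in>T. \<not> connected_graph S (T - {e}))"

definition bichromatic_spanning_tree ::
    "point set \<Rightarrow> (point \<Rightarrow> bool) \<Rightarrow> point set set \<Rightarrow> bool" where
  "bichromatic_spanning_tree S red T \<longleftrightarrow>
     spanning_tree S T \<and> (\<forall>e\<in>T. \<exists>a b. e = {a, b} \<and> red a \<and> \<not> red b)"

definition edge_length :: "point set \<Rightarrow> real" where
  "edge_length e = (THE d. \<exists>a b. e = {a, b} \<and> d = dist a b)"

definition tree_length :: "point set set \<Rightarrow> real" where
  "tree_length T = (\<Sum>e\<in>T. edge_length e)"

definition min_bichromatic_spanning_tree ::
    "point set \<Rightarrow> (point \<Rightarrow> bool) \<Rightarrow> point set set \<Rightarrow> bool" where
  "min_bichromatic_spanning_tree S red T \<longleftrightarrow>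
     bichromatic_spanning_tree S red T \<and>
     (\<forall>T'. bichromatic_spanning_tree S red T' \<longrightarrow> tree_length T \<le> tree_length T')"

definition edges_cross :: "point set \<Rightarrow> point set \<Rightarrow> bool" where
  "edges_cross e f \<longleftrightarrow> (\<exists>a b c d. e = {a, b} \<and> f = {c, d} \<and>
       open_segment a b \<inter> open_segment c d \<noteq> {})"

definition crossing_number :: "point set set \<Rightarrow> point set \<Rightarrow> nat" where
  "crossing_number T e = card {f \<in> T. f \<noteq> e \<and> edges_cross e f}"

end

theory Submission
  imports Defs
begin

text \<open>Two segments sharing an endpoint can only cross if their three endpoints are collinear, so in
  general position an edge of a spanning tree crosses none of its neighbours. For \<open>n \<ge> 3\<close> every
  edge has a neighbour, and the tree has \<open>n - 1\<close> edges; this leaves at most \<open>n - 3\<close> candidates.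
  The bound thus holds for every spanning tree, minimal or not.

  For sharpness, take two red points \<open>r\<^sub>1, r\<^sub>2\<close> such that every blue point is at least as close to
  \<open>r\<^sub>2\<close> as to \<open>r\<^sub>1\<close>, with \<open>b\<^sub>0\<close> the blue point nearest to \<open>r\<^sub>1\<close>. In a bichromatic spanning tree some
  blue vertex is adjacent to both reds, and every other blue vertex has an edge of its own, so the
  star at \<open>r\<^sub>2\<close> together with the edge \<open>r\<^sub>1 b\<^sub>0\<close> is a MinBST. Placing the other \<open>n - 3\<close> blue points on
  a parabola so that their edges to \<open>r\<^sub>2\<close> all cross the long edge \<open>r\<^sub>1 b\<^sub>0\<close> attains the bound.\<close>

section \<open>Crossings of adjacent edges\<close>

lemma open_segments_meet_imp_collinear:
  fixes a b c :: "'a::euclidean_space"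
  assumes "open_segment a b \<inter> open_segment a c \<noteq> {}"
  shows "collinear {a, b, c}"
proof -
  obtain p where p: "p \<in> open_segment a b" "p \<in> open_segment a c"
    using assms by blast
  then have "collinear {b, a, p}" "collinear {a, p, c}" "a \<noteq> p"
    using between_imp_collinear[of a b p] between_imp_collinear[of a c p]
    by (auto simp: between_mem_segment open_segment_def insert_commute)
  then show ?thesis
    using collinear_3_trans[of b a p c] by (simp add: insert_commute)
qed

lemma general_position_adjacent_edges_not_cross:
  assumes "general_position S" "is_edge_on S e" "is_edge_on S f" "e \<noteq> f" "e \<inter> f \<noteq> {}"
  shows "\<not> edges_cross e f"
proof -
  obtain a b c d where e: "e = {a, b}" "a \<in> S" "b \<in> S" "a \<noteq> b"
    and f: "f = {c, d}" "c \<in> S" "d \<in> S" "c \<noteq> d"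
    using assms(2,3) unfolding is_edge_on_def by blast
  obtain x y z where xyz: "e = {x, y}" "f = {x, z}" "x \<in> S" "y \<in> S" "z \<in> S"
      "x \<noteq> y" "x \<noteq> z" "y \<noteq> z"
  proof -
    consider "a = c" | "a = d" | "b = c" | "b = d"
      using assms(5) e(1) f(1) by blast
    then show thesis
      using that e f assms(4) by cases (auto simp: insert_commute)
  qed
  show ?thesis
  proof
    assume "edges_cross e f"
    then obtain a b c d where "{x, y} = {a, b}" "{x, z} = {c, d}"
        "open_segment a b \<inter> open_segment c d \<noteq> {}"
      unfolding edges_cross_def xyz by blast
    then have "open_segment x y \<inter> open_segment x z \<noteq> {}"
      by (auto simp: doubleton_eq_iff open_segment_commute)
    then have "collinear {x, y, z}"
      by (rule open_segments_meet_imp_collinear)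
    with assms(1) xyz show False
      unfolding general_position_def by blast
  qed
qed

section \<open>Spanning trees\<close>

definition graph_adj :: "'a set set \<Rightarrow> ('a \<times> 'a) set" where
  "graph_adj T = {(x, y). {x, y} \<in> T \<and> x \<noteq> y}"

definition graph_component :: "'a set \<Rightarrow> 'a set set \<Rightarrow> 'a \<Rightarrow> 'a set" where
  "graph_component S T x = {y \<in> S. (x, y) \<in> (graph_adj T)\<^sup>*}"

lemma connected_graph_iff_rtrancl:
  "connected_graph S T \<longleftrightarrow> (\<forall>u\<in>S. \<forall>v\<in>S. (u, v) \<in> (graph_adj T)\<^sup>*)"
  unfolding connected_graph_def graph_adj_def by simp

lemma spanning_tree_connected: "spanning_tree S T \<Longrightarrow> connected_graph S T"
  by (simp add: spanning_tree_def)

lemma spanning_tree_edgeD: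
  "spanning_tree S T \<Longrightarrow> f \<in> T \<Longrightarrow> \<exists>a b. a \<in> S \<and> b \<in> S \<and> a \<noteq> b \<and> f = {a, b}"
  by (simp add: spanning_tree_def is_edge_on_def)

lemma spanning_tree_edge_subset: "spanning_tree S T \<Longrightarrow> f \<in> T \<Longrightarrow> f \<subseteq> S"
  by (drule (1) spanning_tree_edgeD) blast

lemma sym_graph_adj: "sym (graph_adj T)"
  unfolding graph_adj_def sym_def by (auto simp: insert_commute)

lemma graph_adj_rtrancl_sym: "(x, y) \<in> (graph_adj T)\<^sup>* \<Longrightarrow> (y, x) \<in> (graph_adj T)\<^sup>*"
  using symD[OF sym_rtrancl[OF sym_graph_adj]] .

lemma graph_adj_rtrancl_mono: "T \<subseteq> T' \<Longrightarrow> (graph_adj T)\<^sup>* \<subseteq> (graph_adj T')\<^sup>*"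
  unfolding graph_adj_def by (rule rtrancl_mono) auto

lemma graph_adj_rtrancl_closed:
  assumes "\<And>x y. {x, y} \<in> T \<Longrightarrow> x \<noteq> y \<Longrightarrow> x \<in> X \<Longrightarrow> y \<in> X"
    and "(u, v) \<in> (graph_adj T)\<^sup>*" "u \<in> X"
  shows "v \<in> X"
  using assms(2,3) by induction (use assms(1) in \<open>auto simp: graph_adj_def\<close>)

lemma connected_graph_closed_superset:
  assumes "connected_graph S T" "\<And>x y. {x, y} \<in> T \<Longrightarrow> x \<noteq> y \<Longrightarrow> x \<in> X \<Longrightarrow> y \<in> X"
    and "u \<in> S" "u \<in> X"
  shows "S \<subseteq> X"
proof
  fix v assume "v \<in> S"
  then have "(u, v) \<in> (graph_adj T)\<^sup>*"
    using assms(1,3) unfolding connected_graph_iff_rtrancl by blast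
  from assms(2) this assms(4) show "v \<in> X"
    by (rule graph_adj_rtrancl_closed)
qed

lemma graph_component_eq:
  "(x, y) \<in> (graph_adj T)\<^sup>* \<Longrightarrow> graph_component S T x = graph_component S T y"
  unfolding graph_component_def by (blast intro: rtrancl_trans dest: graph_adj_rtrancl_sym)

lemma card_components_insert_edge_less:
  assumes "finite S" "a \<in> S" "b \<in> S" "(a, b) \<notin> (graph_adj F)\<^sup>*"
  shows "card (graph_component S (insert {a, b} F) ` S) < card (graph_component S F ` S)"
proof -
  let ?G = "insert {a, b} F"
  define merge where "merge C = graph_component S ?G (SOME x. x \<in> C)" for C
  have merge: "merge (graph_component S F x) = graph_component S ?G x" if "x \<in> S" for x
  proof -
    have "x \<in> graph_component S F x"
      using that unfolding graph_component_def by simp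
    then have "(SOME y. y \<in> graph_component S F x) \<in> graph_component S F x"
      by (rule someI)
    then have "(x, SOME y. y \<in> graph_component S F x) \<in> (graph_adj F)\<^sup>*"
      unfolding graph_component_def by blast
    then have "(x, SOME y. y \<in> graph_component S F x) \<in> (graph_adj ?G)\<^sup>*"
      using graph_adj_rtrancl_mono[of F ?G] by blast
    then show ?thesis
      unfolding merge_def by (simp add: graph_component_eq)
  qed
  then have image: "graph_component S ?G ` S = merge ` graph_component S F ` S"
    by (simp add: image_image)
  have "a \<noteq> b"
    using assms(4) by auto
  then have "(a, b) \<in> (graph_adj ?G)\<^sup>*"
    unfolding graph_adj_def by auto
  then have "merge (graph_component S F a) = merge (graph_component S F b)"
    using assms(2,3) by (simp add: merge graph_component_eq)
  moreover have "graph_component S F a \<noteq> graph_component S F b"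
    using assms(3,4) unfolding graph_component_def by blast
  ultimately have "\<not> inj_on merge (graph_component S F ` S)"
    using assms(2,3) unfolding inj_on_def by blast
  moreover have "finite (graph_component S F ` S)"
    using assms(1) by blast
  ultimately show ?thesis
    unfolding image using card_image_le inj_on_iff_eq_card le_neq_implies_less by blast
qed

lemma forest_card_le:
  assumes "finite T" "finite S" "\<forall>e\<in>T. is_edge_on S e"
    and "\<forall>a b. {a, b} \<in> T \<longrightarrow> a \<noteq> b \<longrightarrow> (a, b) \<notin> (graph_adj (T - {{a, b}}))\<^sup>*"
  shows "card (graph_component S T ` S) + card T \<le> card S"
  using assms(1,3,4)
proof (induction T rule: finite_induct)
  case empty
  have "graph_component S {} ` S = (\<lambda>x. {x}) ` S"
    unfolding graph_component_def graph_adj_def by auto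
  then show ?case
    by (simp add: card_image)
next
  case (insert f F)
  obtain a b where ab: "a \<in> S" "b \<in> S" "a \<noteq> b" "f = {a, b}"
    using insert.prems(1) unfolding is_edge_on_def by auto
  have "(a, b) \<notin> (graph_adj (insert f F - {{a, b}}))\<^sup>*"
    using insert.prems(2) ab by blast
  moreover have "insert f F - {{a, b}} = F"
    using insert.hyps(2) ab(4) by auto
  ultimately have "(a, b) \<notin> (graph_adj F)\<^sup>*"
    by simp
  then have "card (graph_component S (insert f F) ` S) < card (graph_component S F ` S)"
    using card_components_insert_edge_less[OF assms(2) ab(1,2)] ab(4) by simp
  moreover have "card (graph_component S F ` S) + card F \<le> card S"
  proof (rule insert.IH)
    show "\<forall>a b. {a, b} \<in> F \<longrightarrow> a \<noteq> b \<longrightarrow> (a, b) \<notin> (graph_adj (F - {{a, b}}))\<^sup>*"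
    proof (intro allI impI)
      fix x y assume "{x, y} \<in> F" "x \<noteq> y"
      then have "(x, y) \<notin> (graph_adj (insert f F - {{x, y}}))\<^sup>*"
        using insert.prems(2) by blast
      moreover have "F - {{x, y}} \<subseteq> insert f F - {{x, y}}"
        by blast
      ultimately show "(x, y) \<notin> (graph_adj (F - {{x, y}}))\<^sup>*"
        using graph_adj_rtrancl_mono by blast
    qed
  qed (use insert.prems(1) in simp)
  ultimately show ?case
    using insert.hyps by simp
qed

lemma spanning_tree_edge_is_bridge:
  assumes "spanning_tree S T" "{a, b} \<in> T" "a \<noteq> b"
  shows "(a, b) \<notin> (graph_adj (T - {{a, b}}))\<^sup>*"
proof
  let ?R = "(graph_adj (T - {{a, b}}))\<^sup>*"
  assume ab: "(a, b) \<in> ?R"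
  have "graph_adj T \<subseteq> ?R"
  proof
    fix p assume "p \<in> graph_adj T"
    then obtain x y where p: "p = (x, y)" "{x, y} \<in> T" "x \<noteq> y"
      unfolding graph_adj_def by auto
    show "p \<in> ?R"
    proof (cases "{x, y} = {a, b}")
      case True
      then show ?thesis
        using ab graph_adj_rtrancl_sym[OF ab] p(1) by (auto simp: doubleton_eq_iff)
    next
      case False
      then show ?thesis
        using p unfolding graph_adj_def by auto
    qed
  qed
  then have "(graph_adj T)\<^sup>* \<subseteq> ?R"
    by (rule rtrancl_subset_rtrancl)
  then have "connected_graph S (T - {{a, b}})"
    using assms(1) unfolding spanning_tree_def connected_graph_iff_rtrancl by blast
  then show False
    using assms(1,2) unfolding spanning_tree_def by blast
qed

lemma spanning_tree_card:
  assumes "spanning_tree S T" "finite S" "S \<noteq> {}"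
  shows "finite T" "card T + 1 \<le> card S"
proof -
  have edges: "\<forall>e\<in>T. is_edge_on S e"
    using assms(1) unfolding spanning_tree_def by blast
  then have "T \<subseteq> Pow S"
    unfolding is_edge_on_def by auto
  then show fin: "finite T"
    using assms(2) finite_subset by blast
  obtain s where s: "s \<in> S"
    using assms(3) by blast
  have "graph_component S T x = graph_component S T s" if "x \<in> S" for x
    using spanning_tree_connected[OF assms(1)] s that
    by (intro graph_component_eq) (simp add: connected_graph_iff_rtrancl)
  then have "graph_component S T ` S = {graph_component S T s}"
    using s by blast
  then show "card T + 1 \<le> card S"
    using forest_card_le[OF fin assms(2) edges] spanning_tree_edge_is_bridge[OF assms(1)] by simp
qed

lemma spanning_tree_edge_has_neighbour:
  assumes "spanning_tree S T" "finite S" "card S \<ge> 3" "e \<in> T"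
  shows "\<exists>f\<in>T. f \<noteq> e \<and> f \<inter> e \<noteq> {}"
proof (rule ccontr)
  assume no_neighbour: "\<not> (\<exists>f\<in>T. f \<noteq> e \<and> f \<inter> e \<noteq> {})"
  obtain a b where ab: "a \<in> S" "e = {a, b}"
    using spanning_tree_edgeD[OF assms(1,4)] by blast
  have "S \<subseteq> e"
  proof (rule connected_graph_closed_superset[OF spanning_tree_connected[OF assms(1)]])
    show "y \<in> e" if "{x, y} \<in> T" "x \<noteq> y" "x \<in> e" for x y
      using no_neighbour that by (cases "{x, y} = e") auto
  qed (use ab in auto)
  then have "card S \<le> card {a, b}"
    using ab(2) by (intro card_mono) auto
  also have "\<dots> \<le> 2"
    by (simp add: card_insert_le_m1)
  finally have "card S \<le> 2" .
  with assms(3) show False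
    by simp
qed

theorem spanning_tree_crossing_number_le:
  assumes "spanning_tree S T" "general_position S" "finite S" "card S \<ge> 3" "e \<in> T"
  shows "crossing_number T e \<le> card S - 3"
proof -
  have "S \<noteq> {}"
    using assms(4) by auto
  then have fin: "finite T" and card: "card T + 1 \<le> card S"
    using spanning_tree_card[OF assms(1,3)] by auto
  obtain f where f: "f \<in> T" "f \<noteq> e" "f \<inter> e \<noteq> {}"
    using spanning_tree_edge_has_neighbour[OF assms(1,3,4,5)] by blast
  have "\<not> edges_cross e f"
    using assms(1,2,5) f
    by (intro general_position_adjacent_edges_not_cross) (auto simp: spanning_tree_def)
  then have "{g \<in> T. g \<noteq> e \<and> edges_cross e g} \<subseteq> T - {e, f}"
    by blast
  then have "crossing_number T e \<le> card (T - {e, f})"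
    unfolding crossing_number_def using fin by (intro card_mono) auto
  also have "\<dots> = card T - 2"
    using fin assms(5) f(1,2) by (simp add: card_Diff_subset)
  finally show ?thesis
    using card by linarith
qed

section \<open>Minimum bichromatic spanning trees with two red points\<close>

lemma bichromatic_spanning_tree_spanning_tree:
  "bichromatic_spanning_tree S red T \<Longrightarrow> spanning_tree S T"
  by (simp add: bichromatic_spanning_tree_def)

lemma edge_length_doubleton [simp]: "edge_length {a, b} = dist a b"
  unfolding edge_length_def
proof (rule the_equality)
  fix d assume "\<exists>x y. {a, b} = {x, y} \<and> d = dist x y"
  then show "d = dist a b"
    by (auto simp: doubleton_eq_iff dist_commute)
qed blast

lemma spanning_tree_edge_length_nonneg:
  "spanning_tree S T \<Longrightarrow> f \<in> T \<Longrightarrow> 0 \<le> edge_length f"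
  by (drule (1) spanning_tree_edgeD) auto

lemma bichromatic_edge_colours:
  assumes "bichromatic_spanning_tree S red T" "{x, y} \<in> T"
  shows "red x \<longleftrightarrow> \<not> red y"
proof -
  obtain a b where "{x, y} = {a, b}" "red a" "\<not> red b"
    using assms unfolding bichromatic_spanning_tree_def by blast
  then show ?thesis
    by (auto simp: doubleton_eq_iff)
qed

lemma spanning_tree_vertex_covered:
  assumes "spanning_tree S T" "u \<in> S" "v \<in> S" "u \<noteq> v"
  shows "\<exists>f\<in>T. v \<in> f"
proof (rule ccontr)
  assume "\<not> (\<exists>f\<in>T. v \<in> f)"
  then have "S \<subseteq> {v}"
    using assms(3) by (intro connected_graph_closed_superset[OF spanning_tree_connected[OF assms(1)]]) auto
  with assms(2,4) show False
    by blast
qed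

lemma bichromatic_spanning_tree_common_neighbour:
  assumes "bichromatic_spanning_tree S red T" "{v \<in> S. red v} = {r1, r2}" "r1 \<noteq> r2"
  shows "\<exists>w. {r1, w} \<in> T \<and> {r2, w} \<in> T"
proof (rule ccontr)
  assume no_common: "\<not> (\<exists>w. {r1, w} \<in> T \<and> {r2, w} \<in> T)"
  have reds: "red r1" "red r2" "r1 \<in> S" "r2 \<in> S"
    using assms(2) by blast+
  let ?X = "insert r1 {v. {r1, v} \<in> T}"
  have "S \<subseteq> ?X"
  proof (rule connected_graph_closed_superset[where u = r1])
    show "connected_graph S T"
      using assms(1) by (simp add: bichromatic_spanning_tree_spanning_tree spanning_tree_connected)
    fix x y assume xy: "{x, y} \<in> T" "x \<noteq> y" "x \<in> ?X"
    show "y \<in> ?X"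
    proof (cases "x = r1")
      case False
      then have "{r1, x} \<in> T"
        using xy(3) by blast
      then have "red y"
        using xy(1) reds(1) bichromatic_edge_colours[OF assms(1)] by blast
      moreover have "y \<in> S"
        using spanning_tree_edge_subset[OF bichromatic_spanning_tree_spanning_tree[OF assms(1)] xy(1)]
        by blast
      ultimately have "y = r1 \<or> y = r2"
        using assms(2) by blast
      then show ?thesis
        using no_common \<open>{r1, x} \<in> T\<close> xy(1) by (auto simp: insert_commute)
    qed (use xy in simp)
  qed (use reds in simp_all)
  then have "{r1, r2} \<in> T"
    using reds(4) assms(3) by auto
  then show False
    using reds bichromatic_edge_colours[OF assms(1)] by blast
qed

lemma sum_le_sum_over_private_edges:
  fixes c :: "'a \<Rightarrow> real" and len :: "'a set \<Rightarrow> real"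
  assumes "finite E" "\<And>f. f \<in> E \<Longrightarrow> 0 \<le> len f"
    and "\<And>v. v \<in> B \<Longrightarrow> \<exists>f\<in>E. f \<inter> B = {v} \<and> c v \<le> len f"
  shows "sum c B \<le> sum len E"
proof (cases "finite B")
  case True
  obtain edge where edge: "\<And>v. v \<in> B \<Longrightarrow> edge v \<in> E \<and> edge v \<inter> B = {v} \<and> c v \<le> len (edge v)"
    using assms(3) by metis
  then have "inj_on edge B"
    by (metis inj_onI singleton_inject)
  then have "sum c B \<le> sum len (edge ` B)"
    using edge by (simp add: sum.reindex sum_mono)
  also have "\<dots> \<le> sum len E"
    using edge assms(1,2) by (intro sum_mono2) auto
  finally show ?thesis .
next
  case False
  then show ?thesis
    using assms(2) by (simp add: sum_nonneg)
qed

lemma bichromatic_tree_length_ge: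
  assumes bt: "bichromatic_spanning_tree S red T" and "finite S"
    and reds: "{v \<in> S. red v} = {r1, r2}" "r1 \<noteq> r2"
    and closer: "\<And>v. v \<in> S \<Longrightarrow> \<not> red v \<Longrightarrow> dist r2 v \<le> dist r1 v"
    and nearest: "\<And>v. v \<in> S \<Longrightarrow> \<not> red v \<Longrightarrow> dist r1 b0 \<le> dist r1 v"
  shows "dist r1 b0 + (\<Sum>v\<in>{v \<in> S. \<not> red v}. dist r2 v) \<le> tree_length T"
proof -
  let ?B = "{v \<in> S. \<not> red v}"
  have st: "spanning_tree S T"
    using bt by (rule bichromatic_spanning_tree_spanning_tree)
  have red12: "red r1" "red r2" and "S \<noteq> {}"
    using reds(1) by blast+
  then have finT: "finite T"
    using spanning_tree_card(1)[OF st \<open>finite S\<close>] by blast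
  obtain w where w: "{r1, w} \<in> T" "{r2, w} \<in> T"
    using bichromatic_spanning_tree_common_neighbour[OF bt reds] by blast
  have "w \<in> S"
    using spanning_tree_edge_subset[OF st w(1)] by blast
  moreover have "\<not> red w"
    using bichromatic_edge_colours[OF bt w(1)] red12 by blast
  ultimately have w_blue: "w \<in> ?B"
    by blast
  let ?E = "T - {{r1, w}, {r2, w}}"
  have "(\<Sum>v\<in>?B - {w}. dist r2 v) \<le> sum edge_length ?E"
  proof (rule sum_le_sum_over_private_edges)
    show "finite ?E" "\<And>f. f \<in> ?E \<Longrightarrow> 0 \<le> edge_length f"
      using finT spanning_tree_edge_length_nonneg[OF st] by auto
    fix v assume v: "v \<in> ?B - {w}"
    have "r1 \<in> S" "r1 \<noteq> v"
      using reds(1) v by auto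
    then obtain f where f: "f \<in> T" "v \<in> f"
      using spanning_tree_vertex_covered[OF st] v by blast
    obtain a b where ab: "a \<noteq> b" "f = {a, b}"
      using spanning_tree_edgeD[OF st f(1)] by blast
    obtain x where x: "f = {x, v}"
      using ab(2) f(2) by (auto simp: insert_commute)
    have "x \<in> S" "red x"
      using spanning_tree_edge_subset[OF st f(1)] bichromatic_edge_colours[OF bt f(1)[unfolded x]] v x
      by auto
    then have x_red: "x = r1 \<or> x = r2"
      using reds(1) by blast
    have "v \<notin> {r1, r2, w}"
      using v red12 by auto
    then have "f \<in> ?E"
      using f by blast
    moreover have "f \<inter> (?B - {w}) = {v}"
      using x \<open>red x\<close> v by auto
    moreover have "dist r2 v \<le> edge_length f"
      using x x_red closer[of v] v by (auto simp: dist_commute)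
    ultimately show "\<exists>f\<in>?E. f \<inter> (?B - {w}) = {v} \<and> dist r2 v \<le> edge_length f"
      by blast
  qed
  moreover have "{r1, w} \<noteq> {r2, w}"
    using reds(2) by (auto simp: doubleton_eq_iff)
  then have "sum edge_length {{r1, w}, {r2, w}} = dist r1 w + dist r2 w"
    by simp
  moreover have "tree_length T = sum edge_length ?E + sum edge_length {{r1, w}, {r2, w}}"
    unfolding tree_length_def using finT w by (intro sum.subset_diff) auto
  moreover have "(\<Sum>v\<in>?B. dist r2 v) = dist r2 w + (\<Sum>v\<in>?B - {w}. dist r2 v)"
    using \<open>finite S\<close> w_blue by (simp add: sum.remove)
  moreover have "dist r1 b0 \<le> dist r1 w"
    using nearest w_blue by blast
  ultimately show ?thesis
    by linarith
qed

lemma not_connected_graph_if_closed: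
  assumes "\<And>x y. {x, y} \<in> T \<Longrightarrow> x \<noteq> y \<Longrightarrow> x \<in> X \<Longrightarrow> y \<in> X"
    and "u \<in> S" "u \<in> X" "w \<in> S" "w \<notin> X"
  shows "\<not> connected_graph S T"
  using connected_graph_closed_superset[of S T X u] assms by blast

definition red_star_tree ::
    "point set \<Rightarrow> (point \<Rightarrow> bool) \<Rightarrow> point \<Rightarrow> point \<Rightarrow> point \<Rightarrow> point set set" where
  "red_star_tree S red r1 r2 b0 = insert {r1, b0} ((\<lambda>v. {r2, v}) ` {v \<in> S. \<not> red v})"

lemma red_star_tree_bichromatic:
  assumes reds: "{v \<in> S. red v} = {r1, r2}" "r1 \<noteq> r2" and b0: "b0 \<in> S" "\<not> red b0"
  shows "bichromatic_spanning_tree S red (red_star_tree S red r1 r2 b0)"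
proof -
  let ?T = "red_star_tree S red r1 r2 b0"
  have r: "r1 \<in> S" "r2 \<in> S" "red r1" "red r2"
    using reds(1) by blast+
  have blue_edge: "(v, r2) \<in> graph_adj ?T" if "v \<in> S" "\<not> red v" for v
    using that r unfolding graph_adj_def red_star_tree_def by (auto simp: insert_commute)
  have "(r1, b0) \<in> graph_adj ?T"
    using r b0 unfolding graph_adj_def red_star_tree_def by auto
  then have "(r1, r2) \<in> (graph_adj ?T)\<^sup>*"
    using blue_edge[OF b0] by (meson converse_rtrancl_into_rtrancl r_into_rtrancl)
  then have to_r2: "(u, r2) \<in> (graph_adj ?T)\<^sup>*" if "u \<in> S" for u
    using reds(1) that blue_edge[of u] by (cases "red u") auto
  have "connected_graph S ?T"
    unfolding connected_graph_iff_rtrancl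
  proof (intro ballI)
    fix u v assume "u \<in> S" "v \<in> S"
    then show "(u, v) \<in> (graph_adj ?T)\<^sup>*"
      using rtrancl_trans[OF to_r2 graph_adj_rtrancl_sym[OF to_r2]] by blast
  qed
  moreover have "\<not> connected_graph S (?T - {f})" if "f \<in> ?T" for f
  proof -
    consider "f = {r1, b0}" | "f = {r2, b0}" | v where "v \<in> S" "\<not> red v" "v \<noteq> b0" "f = {r2, v}"
      using \<open>f \<in> ?T\<close> unfolding red_star_tree_def by blast
    then show ?thesis
    proof cases
      case 1
      show ?thesis
        by (rule not_connected_graph_if_closed[where X = "{r1}" and u = r1 and w = r2])
          (use 1 r reds(2) in \<open>auto simp: red_star_tree_def doubleton_eq_iff\<close>)
    next
      case 2
      show ?thesis
        by (rule not_connected_graph_if_closed[where X = "{r1, b0}" and u = r1 and w = r2])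
          (use 2 r reds b0 in \<open>auto simp: red_star_tree_def doubleton_eq_iff\<close>)
    next
      case 3
      show ?thesis
        by (rule not_connected_graph_if_closed[where X = "{v}" and u = v and w = r2])
          (use 3 r reds b0 in \<open>auto simp: red_star_tree_def doubleton_eq_iff\<close>)
    qed
  qed
  moreover have "is_edge_on S f" "\<exists>a b. f = {a, b} \<and> red a \<and> \<not> red b" if "f \<in> ?T" for f
    using that r b0 reds(2) unfolding red_star_tree_def is_edge_on_def by auto
  ultimately show ?thesis
    unfolding bichromatic_spanning_tree_def spanning_tree_def by (intro conjI ballI) simp_all
qed

lemma red_star_tree_length:
  assumes "finite S" "{v \<in> S. red v} = {r1, r2}" "r1 \<noteq> r2"
  shows "tree_length (red_star_tree S red r1 r2 b0) = dist r1 b0 + (\<Sum>v\<in>{v \<in> S. \<not> red v}. dist r2 v)"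
proof -
  have "{r1, b0} \<notin> (\<lambda>v. {r2, v}) ` {v \<in> S. \<not> red v}"
    using assms(2,3) by (auto simp: doubleton_eq_iff)
  moreover have "inj_on (\<lambda>v. {r2, v}) {v \<in> S. \<not> red v}"
    using assms(2) by (auto simp: inj_on_def doubleton_eq_iff)
  ultimately show ?thesis
    using assms(1) by (simp add: tree_length_def red_star_tree_def sum.reindex)
qed

theorem red_star_tree_min:
  assumes "finite S" "{v \<in> S. red v} = {r1, r2}" "r1 \<noteq> r2" "b0 \<in> S" "\<not> red b0"
    and "\<And>v. v \<in> S \<Longrightarrow> \<not> red v \<Longrightarrow> dist r2 v \<le> dist r1 v"
    and "\<And>v. v \<in> S \<Longrightarrow> \<not> red v \<Longrightarrow> dist r1 b0 \<le> dist r1 v"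
  shows "min_bichromatic_spanning_tree S red (red_star_tree S red r1 r2 b0)"
  unfolding min_bichromatic_spanning_tree_def
proof (intro conjI allI impI)
  show "bichromatic_spanning_tree S red (red_star_tree S red r1 r2 b0)"
    using assms(2-5) by (rule red_star_tree_bichromatic)
  fix T assume "bichromatic_spanning_tree S red T"
  then show "tree_length (red_star_tree S red r1 r2 b0) \<le> tree_length T"
    unfolding red_star_tree_length[OF assms(1-3)]
    by (rule bichromatic_tree_length_ge[OF _ assms(1-3) assms(6,7)])
qed

section \<open>The extremal configuration\<close>

lemma collinear_2D_det:
  fixes a b c :: "real^2"
  assumes "collinear {a, b, c}"
  shows "(b$1 - a$1) * (c$2 - a$2) = (b$2 - a$2) * (c$1 - a$1)"
proof -
  obtain u k1 k2 where k: "b - a = k1 *\<^sub>R u" "c - a = k2 *\<^sub>R u"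
    using assms unfolding collinear_def by blast
  have "b$i - a$i = k1 * u$i" "c$i - a$i = k2 * u$i" for i
    using arg_cong[OF k(1), of "\<lambda>v. v$i"] arg_cong[OF k(2), of "\<lambda>v. v$i"] by simp_all
  then show ?thesis by (simp add: algebra_simps)
qed

lemma general_position_insert:
  assumes "general_position S" "p \<notin> S"
    and "pairwise (\<lambda>a b. \<not> collinear {p, a, b}) S"
  shows "general_position (insert p S)"
  unfolding general_position_def
proof (intro ballI impI)
  fix a b c assume abc: "a \<in> insert p S" "b \<in> insert p S" "c \<in> insert p S"
    "a \<noteq> b \<and> b \<noteq> c \<and> a \<noteq> c"
  consider "a = p" | "b = p" | "c = p" | "a \<in> S" "b \<in> S" "c \<in> S"
    using abc(1-3) by blast
  then show "\<not> collinear {a, b, c}"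
  proof cases
    case 1
    then show ?thesis
      using abc assms(3) unfolding pairwise_def by blast
  next
    case 2
    then have "{a, b, c} = {p, a, c}"
      by auto
    then show ?thesis
      using abc 2 assms(3) unfolding pairwise_def by auto
  next
    case 3
    then have "{a, b, c} = {p, a, b}"
      by auto
    then show ?thesis
      using abc 3 assms(3) unfolding pairwise_def by auto
  next
    case 4
    then show ?thesis
      using abc(4) assms(1) unfolding general_position_def by blast
  qed
qed

definition red_low :: point where "red_low = vector [1/2, -10]"
definition red_origin :: point where "red_origin = vector [0, 0]"
definition blue_apex :: point where "blue_apex = vector [1/2, 3/2]"
definition blue_parabola :: "real \<Rightarrow> point" where "blue_parabola t = vector [1 + t\<^sup>2, 2 + t]"

lemma extremal_point_components [simp]:
  "red_low$1 = 1/2" "red_low$2 = -10" "red_origin$1 = 0" "red_origin$2 = 0"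
  "blue_apex$1 = 1/2" "blue_apex$2 = 3/2"
  "blue_parabola t$1 = 1 + t\<^sup>2" "blue_parabola t$2 = 2 + t"
  by (simp_all add: red_low_def red_origin_def blue_apex_def blue_parabola_def)

lemma point_eq_iff: "(x::point) = y \<longleftrightarrow> x$1 = y$1 \<and> x$2 = y$2"
  by (simp add: vec_eq_iff forall_2)

lemma dist_point: "dist (x::point) y = sqrt ((x$1 - y$1)\<^sup>2 + (x$2 - y$2)\<^sup>2)"
  by (simp add: dist_vec_def L2_set_def sum_2 dist_real_def)

lemma extremal_points_distinct [simp]:
  "red_low \<noteq> red_origin" "red_low \<noteq> blue_apex" "red_origin \<noteq> blue_apex"
  "red_origin \<noteq> red_low" "blue_apex \<noteq> red_low" "blue_apex \<noteq> red_origin"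
  "blue_parabola t \<noteq> red_low" "blue_parabola t \<noteq> red_origin" "blue_parabola t \<noteq> blue_apex"
  "red_low \<noteq> blue_parabola t" "red_origin \<noteq> blue_parabola t" "blue_apex \<noteq> blue_parabola t"
  "blue_parabola s = blue_parabola t \<longleftrightarrow> s = t"
proof -
  have "1 + t\<^sup>2 \<noteq> 1/2" "1 + t\<^sup>2 \<noteq> 0"
    using zero_le_power2[of t] by linarith+
  then show "blue_parabola t \<noteq> red_low" "blue_parabola t \<noteq> red_origin"
    "blue_parabola t \<noteq> blue_apex" "red_low \<noteq> blue_parabola t"
    "red_origin \<noteq> blue_parabola t" "blue_apex \<noteq> blue_parabola t"
    by (simp_all add: point_eq_iff)
qed (auto simp: point_eq_iff)

lemma blue_parabola_not_collinear:
  assumes "s \<noteq> t" "s \<noteq> u" "t \<noteq> u"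
  shows "\<not> collinear {blue_parabola s, blue_parabola t, blue_parabola u}"
proof
  assume "collinear {blue_parabola s, blue_parabola t, blue_parabola u}"
  then have "(t\<^sup>2 - s\<^sup>2) * (u - s) = (t - s) * (u\<^sup>2 - s\<^sup>2)"
    by (auto dest: collinear_2D_det)
  then have "(t - s) * (u - s) * (t - u) = 0"
    by (simp add: power2_eq_square algebra_simps)
  with assms show False
    by simp
qed

text \<open>The collinearity determinant of \<open>X\<close>, \<open>blue_parabola s\<close>, \<open>blue_parabola t\<close> factors as
  \<open>t - s\<close> times the expression below.\<close>
lemma blue_parabola_chord_not_collinear:
  assumes "s \<noteq> t" "(1 - X$1) - (2 - X$2) * (s + t) - s * t \<noteq> 0"
  shows "\<not> collinear {X, blue_parabola s, blue_parabola t}"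
proof
  assume "collinear {X, blue_parabola s, blue_parabola t}"
  then have "(1 + s\<^sup>2 - X$1) * (2 + t - X$2) = (2 + s - X$2) * (1 + t\<^sup>2 - X$1)"
    by (auto dest: collinear_2D_det)
  then have "(t - s) * ((1 - X$1) - (2 - X$2) * (s + t) - s * t) = 0"
    by (simp add: power2_eq_square algebra_simps)
  with assms show False
    by simp
qed

lemma special_points_not_collinear: "\<not> collinear {red_low, red_origin, blue_apex}"
  by (auto dest: collinear_2D_det)

lemma two_special_points_blue_parabola_not_collinear:
  assumes "0 \<le> t"
  shows "\<not> collinear {red_low, red_origin, blue_parabola t}"
    and "\<not> collinear {red_low, blue_apex, blue_parabola t}"
    and "\<not> collinear {red_origin, blue_apex, blue_parabola t}"
proof -
  have "0 < 3 * (t - 1/6)\<^sup>2 + 11/12"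
    by (intro add_nonneg_pos) simp_all
  then have "2 + t \<noteq> 3 * (1 + t\<^sup>2)"
    by (simp add: power2_eq_square algebra_simps)
  with assms show "\<not> collinear {red_low, red_origin, blue_parabola t}"
    "\<not> collinear {red_low, blue_apex, blue_parabola t}"
    "\<not> collinear {red_origin, blue_apex, blue_parabola t}"
    by (auto dest!: collinear_2D_det simp: algebra_simps add_nonneg_eq_0_iff)
qed

definition extremal_points :: "real set \<Rightarrow> point set" where
  "extremal_points P = insert red_low (insert red_origin (insert blue_apex (blue_parabola ` P)))"

definition extremal_red :: "point \<Rightarrow> bool" where
  "extremal_red p \<longleftrightarrow> p = red_low \<or> p = red_origin"

lemma general_position_extremal_points:
  assumes P: "P \<subseteq> {1/2..<1}"
  shows "general_position (extremal_points P)"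
proof -
  have chord: "\<not> collinear {X, blue_parabola s, blue_parabola t}"
    if "X \<in> {red_low, red_origin, blue_apex}" "s \<in> P" "t \<in> P" "s \<noteq> t" for X s t
  proof (rule blue_parabola_chord_not_collinear)
    have "1/2 \<le> s" "1/2 \<le> t"
      using that(2,3) P by auto
    then have "1/2 * (1/2) \<le> s * t"
      by (intro mult_mono) auto
    with \<open>1/2 \<le> s\<close> \<open>1/2 \<le> t\<close> that(1)
    show "(1 - X$1) - (2 - X$2) * (s + t) - s * t \<noteq> 0"
      by (auto simp: field_simps)
  qed (use that in simp)
  have triple: "\<not> collinear {red_low, red_origin, blue_parabola t}"
    "\<not> collinear {red_low, blue_apex, blue_parabola t}"
    "\<not> collinear {red_origin, blue_apex, blue_parabola t}" if "t \<in> P" for t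
    using that P two_special_points_blue_parabola_not_collinear[of t] by auto
  have "general_position (blue_parabola ` P)"
    unfolding general_position_def
  proof (intro ballI impI)
    fix a b c assume "a \<in> blue_parabola ` P" "b \<in> blue_parabola ` P" "c \<in> blue_parabola ` P"
      and distinct: "a \<noteq> b \<and> b \<noteq> c \<and> a \<noteq> c"
    then obtain s t u where "a = blue_parabola s" "b = blue_parabola t" "c = blue_parabola u"
      by (auto simp: image_iff)
    with distinct show "\<not> collinear {a, b, c}"
      by (simp add: blue_parabola_not_collinear)
  qed
  then have "general_position (insert blue_apex (blue_parabola ` P))"
    by (rule general_position_insert) (use chord in \<open>auto simp: pairwise_image pairwise_def\<close>)
  then have "general_position (insert red_origin (insert blue_apex (blue_parabola ` P)))"
    by (rule general_position_insert)
      (use chord triple(3) in \<open>auto simp: pairwise_insert pairwise_image pairwise_def insert_commute\<close>)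
  then show ?thesis
    unfolding extremal_points_def
    by (rule general_position_insert)
      (use chord triple(1,2) special_points_not_collinear in
        \<open>auto simp: pairwise_insert pairwise_image pairwise_def insert_commute\<close>)
qed

lemma extremal_points_card:
  assumes "finite P"
  shows "finite (extremal_points P)" "card (extremal_points P) = card P + 3"
proof -
  have "card (blue_parabola ` P) = card P"
    by (rule card_image) (simp add: inj_on_def)
  then show "finite (extremal_points P)" "card (extremal_points P) = card P + 3"
    using assms by (simp_all add: extremal_points_def image_iff)
qed

definition extremal_tree :: "real set \<Rightarrow> point set set" where
  "extremal_tree P = red_star_tree (extremal_points P) extremal_red red_low red_origin blue_apex"

lemma extremal_red_points: "{v \<in> extremal_points P. extremal_red v} = {red_low, red_origin}"
  by (auto simp: extremal_points_def extremal_red_def)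

lemma extremal_blue_points:
  "{v \<in> extremal_points P. \<not> extremal_red v} = insert blue_apex (blue_parabola ` P)"
  by (auto simp: extremal_points_def extremal_red_def)

lemma extremal_blue_closer_to_origin:
  assumes "v \<in> insert blue_apex (blue_parabola ` P)" "P \<subseteq> {1/2..<1}"
  shows "dist red_origin v \<le> dist red_low v"
  using assms
proof (cases "v = blue_apex")
  case False
  then obtain t where t: "v = blue_parabola t" "1/2 \<le> t" "t \<le> 1"
    using assms by auto
  then have "t * t \<le> 1"
    by (simp add: mult_le_one)
  with t have "(red_origin$1 - v$1)\<^sup>2 + (red_origin$2 - v$2)\<^sup>2 \<le> (red_low$1 - v$1)\<^sup>2 + (red_low$2 - v$2)\<^sup>2"
    by (simp add: power2_eq_square algebra_simps)
  then show ?thesis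
    unfolding dist_point by (rule real_sqrt_le_mono)
qed (simp add: dist_point power2_eq_square)

lemma extremal_apex_nearest_to_low:
  assumes "v \<in> insert blue_apex (blue_parabola ` P)" "P \<subseteq> {1/2..<1}"
  shows "dist red_low blue_apex \<le> dist red_low v"
  using assms
proof (cases "v = blue_apex")
  case False
  then obtain t where t: "v = blue_parabola t" "1/2 \<le> t"
    using assms by auto
  have "0 \<le> t * t"
    by simp
  with t have "(red_low$1 - blue_apex$1)\<^sup>2 + (red_low$2 - blue_apex$2)\<^sup>2 \<le> (red_low$1 - v$1)\<^sup>2 + (red_low$2 - v$2)\<^sup>2"
    by (simp add: power2_eq_square algebra_simps)
  then show ?thesis
    unfolding dist_point by (rule real_sqrt_le_mono)
qed simp

text \<open>The segment from the origin to \<open>blue_parabola t\<close> meets the line \<open>x = 1/2\<close> at height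
  \<open>(2 + t) / (2 (1 + t\<^sup>2))\<close>, strictly between \<open>0\<close> and \<open>3/2\<close>.\<close>
lemma extremal_long_edge_crosses:
  assumes "0 \<le> t"
  shows "edges_cross {red_low, blue_apex} {red_origin, blue_parabola t}"
proof -
  define q where "q = 1 + t\<^sup>2"
  have q: "1 \<le> q"
    unfolding q_def by simp
  define y where "y = (2 + t) / (2 * q)"
  have "0 < 3 * (t - 1/6)\<^sup>2 + 11/12"
    by (intro add_nonneg_pos) simp_all
  then have "2 + t < 3 * q" "0 < 2 + t"
    unfolding q_def using assms by (simp_all add: power2_eq_square algebra_simps)
  then have y: "0 < y" "y < 3/2"
    unfolding y_def using q by (simp_all add: divide_less_eq)
  define p where "p = (1 / (2 * q)) *\<^sub>R blue_parabola t"
  have p: "p$1 = 1/2" "p$2 = y"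
    unfolding p_def y_def using q by (simp_all flip: q_def)
  have "p \<in> open_segment red_origin (blue_parabola t)"
    unfolding in_segment
    by (rule conjI, simp, rule exI[of _ "1 / (2 * q)"]) (use q in \<open>simp add: point_eq_iff p_def\<close>)
  moreover have "p \<in> open_segment red_low blue_apex"
    unfolding in_segment
    by (rule conjI, simp, rule exI[of _ "2 * (y + 10) / 23"])
      (use y in \<open>simp add: point_eq_iff p field_simps\<close>)
  ultimately show ?thesis
    unfolding edges_cross_def by blast
qed

lemma min_bichromatic_spanning_tree_extremal_tree:
  assumes "finite P" "P \<subseteq> {1/2..<1}"
  shows "min_bichromatic_spanning_tree (extremal_points P) extremal_red (extremal_tree P)"
  unfolding extremal_tree_def using extremal_points_card(1)[OF assms(1)] extremal_red_points
  by (rule red_star_tree_min)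
    (use assms(2) extremal_blue_closer_to_origin extremal_apex_nearest_to_low in
      \<open>auto simp: extremal_blue_points extremal_points_def extremal_red_def\<close>)

lemma crossing_number_extremal_tree:
  assumes "P \<subseteq> {1/2..<1}"
  shows "crossing_number (extremal_tree P) {red_low, blue_apex} = card P"
proof -
  let ?T = "extremal_tree P"
  have T: "?T = insert {red_low, blue_apex} ((\<lambda>v. {red_origin, v}) ` insert blue_apex (blue_parabola ` P))"
    unfolding extremal_tree_def red_star_tree_def extremal_blue_points ..
  have "\<not> edges_cross {red_low, blue_apex} {red_origin, blue_apex}"
    using general_position_extremal_points[OF assms]
    by (rule general_position_adjacent_edges_not_cross)
      (auto simp: is_edge_on_def extremal_points_def doubleton_eq_iff)
  moreover have "edges_cross {red_low, blue_apex} {red_origin, blue_parabola t}" if "t \<in> P" for t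
    using that assms by (intro extremal_long_edge_crosses) auto
  ultimately have "{f \<in> ?T. f \<noteq> {red_low, blue_apex} \<and> edges_cross {red_low, blue_apex} f} =
      (\<lambda>t. {red_origin, blue_parabola t}) ` P"
    unfolding T by (auto simp: doubleton_eq_iff)
  moreover have "inj_on (\<lambda>t. {red_origin, blue_parabola t}) P"
    by (auto simp: inj_on_def doubleton_eq_iff)
  ultimately show ?thesis
    unfolding crossing_number_def by (simp add: card_image)
qed

theorem proposition7:
  fixes n :: nat
  assumes "n \<ge> 3"
  shows "(\<forall>(S::point set) (red::point \<Rightarrow> bool) T.
            finite S \<and> card S = n \<and> general_position S \<and>
            (\<exists>p\<in>S. red p) \<and> (\<exists>q\<in>S. \<not> red q) \<and>
            min_bichromatic_spanning_tree S red T \<longrightarrow>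
            (\<forall>e\<in>T. crossing_number T e \<le> n - 3))
       \<and> (\<exists>(S::point set) (red::point \<Rightarrow> bool) T.
            finite S \<and> card S = n \<and> general_position S \<and>
            min_bichromatic_spanning_tree S red T \<and>
            (\<exists>e\<in>T. crossing_number T e = n - 3))"
proof (intro conjI allI impI ballI)
  fix S :: "point set" and red T e
  assume "finite S \<and> card S = n \<and> general_position S \<and> (\<exists>p\<in>S. red p) \<and> (\<exists>q\<in>S. \<not> red q) \<and>
      min_bichromatic_spanning_tree S red T" and "e \<in> T"
  then show "crossing_number T e \<le> n - 3"
    using spanning_tree_crossing_number_le[of S T e] assms
    by (auto simp: min_bichromatic_spanning_tree_def bichromatic_spanning_tree_def)
next
  obtain P :: "real set" where P: "finite P" "card P = n - 3" "P \<subseteq> {1/2..<1}"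
    using infinite_arbitrarily_large[of "{1/2..<1::real}" "n - 3"] by auto
  have "{red_low, blue_apex} \<in> extremal_tree P"
    unfolding extremal_tree_def red_star_tree_def by simp
  then show "\<exists>(S::point set) (red::point \<Rightarrow> bool) T.
      finite S \<and> card S = n \<and> general_position S \<and> min_bichromatic_spanning_tree S red T \<and>
      (\<exists>e\<in>T. crossing_number T e = n - 3)"
    using extremal_points_card[OF P(1)] general_position_extremal_points[OF P(3)]
      min_bichromatic_spanning_tree_extremal_tree[OF P(1,3)] crossing_number_extremal_tree[OF P(3)]
      P(2) assms
    by (metis le_add_diff_inverse2)
qed

end
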